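(* Let $\mathcal S$ be a $2$-$(v,k,\lambda)$ design admitting a flag-transitive automorphism group $\Gamma$, with $v=k+1$ or $v=k+2$. Then one of the following holds: (1) $\mathcal S$ is the complete $2$-$(v,k,\lambda)$ design and $\Gamma$ acts $2$-transitively on points; (2) $k$ is odd and $\Gamma$ is a point-primitive group of rank $3$ with subdegrees $1,\frac{k+1}{2},\frac{k+1}{2}$.
   Context: A complete $2$-$(v,k,\lambda)$ design has all $k$-subsets as blocks. *)

theory Defs
  imports "HOL-Combinatorics.Permutations" "HOL-Library.Multiset"
begin

definition design2 :: "'a set \<Rightarrow> 'a set set \<Rightarrow> nat \<Rightarrow> nat \<Rightarrow> bool" where
  "design2 P Bs k lam \<longleftrightarrow> finite P \<and> (\<forall>B\<in>Bs. B \<subseteq> P \<and> card B = k)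
     \<and> (\<forall>x\<in>P. \<forall>y\<in>P. x \<noteq> y \<longrightarrow> card {B\<in>Bs. x \<in> B \<and> y \<in> B} = lam)
     \<and> 2 \<le> k \<and> k < card P \<and> 0 < lam"

definition complete_design :: "'a set \<Rightarrow> 'a set set \<Rightarrow> nat \<Rightarrow> bool" where
  "complete_design P Bs k \<longleftrightarrow> Bs = {B. B \<subseteq> P \<and> card B = k}"

definition perm_group_on :: "('a \<Rightarrow> 'a) set \<Rightarrow> 'a set \<Rightarrow> bool" where
  "perm_group_on G P \<longleftrightarrow> id \<in> G \<and> (\<forall>g\<in>G. g permutes P)
     \<and> (\<forall>g\<in>G. \<forall>h\<in>G. g \<circ> h \<in> G) \<and> (\<forall>g\<in>G. inv g \<in> G)"

definition automorphism_group :: "('a \<Rightarrow> 'a) set \<Rightarrow> 'a set \<Rightarrow> 'a set set \<Rightarrow> bool" where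
  "automorphism_group G P Bs \<longleftrightarrow> perm_group_on G P \<and> (\<forall>g\<in>G. \<forall>B\<in>Bs. g ` B \<in> Bs)"

definition flag_transitive :: "('a \<Rightarrow> 'a) set \<Rightarrow> 'a set \<Rightarrow> 'a set set \<Rightarrow> bool" where
  "flag_transitive G P Bs \<longleftrightarrow>
     (\<forall>x B y C. B \<in> Bs \<and> x \<in> B \<and> C \<in> Bs \<and> y \<in> C \<longrightarrow> (\<exists>g\<in>G. g x = y \<and> g ` B = C))"

definition transitive_on :: "('a \<Rightarrow> 'a) set \<Rightarrow> 'a set \<Rightarrow> bool" where
  "transitive_on G P \<longleftrightarrow> (\<forall>x\<in>P. \<forall>y\<in>P. \<exists>g\<in>G. g x = y)"

definition two_transitive_on :: "('a \<Rightarrow> 'a) set \<Rightarrow> 'a set \<Rightarrow> bool" where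
  "two_transitive_on G P \<longleftrightarrow> (\<forall>x\<in>P. \<forall>y\<in>P. \<forall>x'\<in>P. \<forall>y'\<in>P.
      x \<noteq> y \<longrightarrow> x' \<noteq> y' \<longrightarrow> (\<exists>g\<in>G. g x = x' \<and> g y = y'))"

definition primitive_on :: "('a \<Rightarrow> 'a) set \<Rightarrow> 'a set \<Rightarrow> bool" where
  "primitive_on G P \<longleftrightarrow> transitive_on G P \<and>
     (\<forall>D. D \<subseteq> P \<and> (\<forall>g\<in>G. g ` D = D \<or> g ` D \<inter> D = {}) \<longrightarrow> card D \<le> 1 \<or> D = P)"

definition orbital :: "('a \<Rightarrow> 'a) set \<Rightarrow> 'a \<times> 'a \<Rightarrow> ('a \<times> 'a) set" where
  "orbital G p = {(g (fst p), g (snd p)) | g. g \<in> G}"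

definition rank :: "('a \<Rightarrow> 'a) set \<Rightarrow> 'a set \<Rightarrow> nat" where
  "rank G P = card (orbital G ` (P \<times> P))"

definition suborbits :: "('a \<Rightarrow> 'a) set \<Rightarrow> 'a set \<Rightarrow> 'a \<Rightarrow> 'a set set" where
  "suborbits G P x = (\<lambda>y. {g y | g. g \<in> G \<and> g x = x}) ` P"

definition subdegrees :: "('a \<Rightarrow> 'a) set \<Rightarrow> 'a set \<Rightarrow> 'a \<Rightarrow> nat multiset" where
  "subdegrees G P x = image_mset card (mset_set (suborbits G P x))"

end

theory Submission
  imports Defs
begin

text \<open>The blocks are the complements of single points (v = k + 1) or of pairs of points
  (v = k + 2). For v = k + 1, point-transitivity moves one block onto all of them, and
  flag-transitivity on the flags (x, P - {y}) is exactly 2-transitivity. For v = k + 2, the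
  number of blocks missing a point is constant, so counting the blocks through two points
  shows that the number of blocks missing both, which is 0 or 1, does not depend on the pair;
  as there is a block, the design is complete. Flag-transitivity then makes G transitive on
  the configurations (c, {a, b}) with c not in {a, b}, and for v \<ge> 4 this forces
  2-transitivity. Thus the first alternative always holds.\<close>

lemma perm_group_on_permutes: "perm_group_on G P \<Longrightarrow> g \<in> G \<Longrightarrow> g permutes P"
  unfolding perm_group_on_def by blast

lemma perm_group_on_comp: "perm_group_on G P \<Longrightarrow> g \<in> G \<Longrightarrow> h \<in> G \<Longrightarrow> g \<circ> h \<in> G"
  unfolding perm_group_on_def by blast

lemma perm_group_on_inv: "perm_group_on G P \<Longrightarrow> g \<in> G \<Longrightarrow> inv g \<in> G"
  unfolding perm_group_on_def by blast

lemma perm_group_on_id: "perm_group_on G P \<Longrightarrow> id \<in> G"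
  unfolding perm_group_on_def by blast

lemma ex_in_Diff_doubleton:
  assumes "finite P" "3 \<le> card P"
  shows "\<exists>c\<in>P. c \<noteq> x \<and> c \<noteq> y"
proof -
  have "card {x, y} < card P"
    using assms(2) by (cases "x = y") auto
  then have "\<not> P \<subseteq> {x, y}"
    using card_mono[of "{x, y}" P] by auto
  then show ?thesis by blast
qed

lemma permutes_image_Diff_eq_Diff_iff:
  assumes g: "g permutes P" and "S \<subseteq> P" "T \<subseteq> P"
  shows "g ` (P - S) = P - T \<longleftrightarrow> g ` S = T"
proof -
  have image_Diff: "g ` (P - S) = P - g ` S"
    using image_set_diff[OF permutes_inj[OF g]] permutes_image[OF g] by simp
  have "g ` S \<subseteq> P"
    using assms(2) permutes_image[OF g] by blast
  then have "P - g ` S = P - T \<longleftrightarrow> g ` S = T"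
    using assms(3) by (metis Diff_Diff_Int Int_absorb1)
  then show ?thesis
    using image_Diff by simp
qed

lemma subset_eq_Diff_singleton_if_card:
  assumes "finite P" "B \<subseteq> P" "card B + 1 = card P"
  obtains z where "z \<in> P" "B = P - {z}"
proof -
  have "card (P - B) = 1"
    using assms card_Diff_subset[OF finite_subset[OF assms(2,1)] assms(2)] by simp
  then obtain z where z: "P - B = {z}"
    by (rule card_1_singletonE)
  show thesis
  proof (rule that)
    show "z \<in> P"
      using z by blast
    show "B = P - {z}"
      using assms(2) z by (metis Diff_Diff_Int Int_absorb1)
  qed
qed

lemma subset_eq_Diff_doubleton_if_card:
  assumes "finite P" "B \<subseteq> P" "card B + 2 = card P"
  obtains x y where "x \<in> P" "y \<in> P" "x \<noteq> y" "B = P - {x, y}"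
proof -
  have "card (P - B) = 2"
    using assms card_Diff_subset[OF finite_subset[OF assms(2,1)] assms(2)] by simp
  then obtain x y where xy: "P - B = {x, y}" "x \<noteq> y"
    by (meson card_2_iff)
  show thesis
  proof (rule that)
    show "x \<in> P" "y \<in> P" "x \<noteq> y"
      using xy by blast+
    show "B = P - {x, y}"
      using assms(2) xy(1) by (metis Diff_Diff_Int Int_absorb1)
  qed
qed

lemma orbital_closed:
  assumes "perm_group_on G P" "g \<in> G" "(x, y) \<in> orbital G p"
  shows "(g x, g y) \<in> orbital G p"
proof -
  obtain h where h: "h \<in> G" "x = h (fst p)" "y = h (snd p)"
    using assms(3) unfolding orbital_def by blast
  then have "g \<circ> h \<in> G"
    using perm_group_on_comp[OF assms(1,2)] by blast
  then show ?thesis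
    using h unfolding orbital_def by (auto intro!: exI[of _ "g \<circ> h"])
qed

lemma orbital_Image_image:
  assumes G: "perm_group_on G P" and g: "g \<in> G"
  shows "orbital G p `` {g x} = g ` (orbital G p `` {x})"
proof
  have gP: "g permutes P"
    using perm_group_on_permutes[OF G g] .
  show "g ` (orbital G p `` {x}) \<subseteq> orbital G p `` {g x}"
    using orbital_closed[OF G g] by blast
  show "orbital G p `` {g x} \<subseteq> g ` (orbital G p `` {x})"
  proof
    fix y assume "y \<in> orbital G p `` {g x}"
    then have "(inv g (g x), inv g y) \<in> orbital G p"
      using orbital_closed[OF G perm_group_on_inv[OF G g]] by blast
    then have "inv g y \<in> orbital G p `` {x}"
      using permutes_inverses(2)[OF gP] by simp
    then show "y \<in> g ` (orbital G p `` {x})"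
      using permutes_inverses(1)[OF gP, of y] by (metis image_eqI)
  qed
qed

lemma card_orbital_Image_eq:
  assumes G: "perm_group_on G P" and tr: "transitive_on G P" and "x \<in> P" "y \<in> P"
  shows "card (orbital G p `` {x}) = card (orbital G p `` {y})"
proof -
  obtain g where g: "g \<in> G" "g x = y"
    using tr assms(3,4) unfolding transitive_on_def by blast
  have "inj_on g (orbital G p `` {x})"
    using permutes_inj_on[OF perm_group_on_permutes[OF G g(1)]] .
  then show ?thesis
    using orbital_Image_image[OF G g(1), of p x] g(2) card_image by metis
qed

text \<open>If no element swaps a and b, the orbital O of (a, b) is antisymmetric. Since G is
  transitive, all points have equally many O-successors. But the stabiliser of {a, b} then
  fixes a and b and is transitive on the other v - 2 points, so a has 1 or v - 1 successors
  while b has 0 or v - 2; this forces v = 3.\<close>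
lemma perm_group_on_swap:
  assumes G: "perm_group_on G P" and fin: "finite P" and v: "card P \<noteq> 3"
    and tr: "transitive_on G P" and ab: "a \<in> P" "b \<in> P" "a \<noteq> b"
    and stab: "\<And>c c'. c \<in> P - {a, b} \<Longrightarrow> c' \<in> P - {a, b} \<Longrightarrow>
                  \<exists>g\<in>G. g ` {a, b} = {a, b} \<and> g c = c'"
  shows "\<exists>g\<in>G. g a = b \<and> g b = a"
proof (rule ccontr)
  assume no_swap: "\<not> (\<exists>g\<in>G. g a = b \<and> g b = a)"
  define succ where "succ x = orbital G (a, b) `` {x}" for x
  have perm: "g permutes P" if "g \<in> G" for g
    using perm_group_on_permutes[OF G that] .
  have succ_iff: "y \<in> succ x \<longleftrightarrow> (\<exists>g\<in>G. g a = x \<and> g b = y)" for x y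
    unfolding succ_def orbital_def by auto
  have succ_subset: "succ x \<subseteq> P" for x
  proof
    fix y assume "y \<in> succ x"
    then obtain g where "g \<in> G" "g b = y"
      using succ_iff by blast
    then show "y \<in> P"
      using permutes_in_image[OF perm] ab(2) by metis
  qed
  have succ_uniform: "succ x - {a, b} = {} \<or> succ x - {a, b} = P - {a, b}"
    if x: "x \<in> {a, b}" for x
  proof -
    have "c' \<in> succ x" if c: "c \<in> succ x - {a, b}" and c': "c' \<in> P - {a, b}" for c c'
    proof -
      obtain g where g: "g \<in> G" "g ` {a, b} = {a, b}" "g c = c'"
        using stab[OF _ c'] c succ_subset by (meson Diff_iff subsetD)
      have "g a \<noteq> g b"
        using permutes_inj[OF perm[OF g(1)]] ab(3) by (meson injD)
      then have "g x = x"
        using g(1,2) no_swap x by (auto simp: doubleton_eq_iff)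
      then show ?thesis
        using orbital_closed[OF G g(1), of x c] c g(3) unfolding succ_def by auto
    qed
    then show ?thesis
      using succ_subset[of x] by blast
  qed
  have "card (P - {a, b}) = card P - 2"
    using fin ab by (simp add: card_Diff_subset)
  then have card_rest: "card (succ x - {a, b}) = 0 \<or> card (succ x - {a, b}) = card P - 2"
    if "x \<in> {a, b}" for x
    using succ_uniform[OF that] by (metis card.empty)
  have not_loop: "x \<notin> succ x" for x
    using succ_iff permutes_inj[OF perm] ab(3) by (metis injD)
  have "b \<in> succ a"
    using succ_iff perm_group_on_id[OF G] by (metis id_apply)
  moreover have "succ a - {b} = succ a - {a, b}"
    using not_loop[of a] by blast
  ultimately have card_succ_a: "card (succ a) = Suc (card (succ a - {a, b}))"
    using card.remove[OF finite_subset[OF succ_subset fin]] by metis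
  have "a \<notin> succ b"
    using succ_iff no_swap by blast
  then have "succ b - {a, b} = succ b"
    using not_loop[of b] by blast
  moreover have "card (succ b) = card (succ a)"
    using card_orbital_Image_eq[OF G tr ab(2,1)] unfolding succ_def .
  moreover have "2 \<le> card P"
    using ab fin card_mono[of P "{a, b}"] by auto
  ultimately show False
    using v card_succ_a card_rest[of a] card_rest[of b] by auto
qed

lemma two_transitive_onI_point_pair_flags:
  assumes G: "perm_group_on G P" and fin: "finite P" and v: "4 \<le> card P"
    and flags: "\<And>a b c a' b' c'. {a, b, c} \<subseteq> P \<Longrightarrow> {a', b', c'} \<subseteq> P \<Longrightarrow>
                  distinct [a, b, c] \<Longrightarrow> distinct [a', b', c'] \<Longrightarrow>
                  \<exists>g\<in>G. g c = c' \<and> g ` {a, b} = {a', b'}"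
  shows "two_transitive_on G P"
proof -
  have third: "\<exists>c\<in>P. c \<noteq> x \<and> c \<noteq> y" for x y
    using ex_in_Diff_doubleton[OF fin] v by simp
  have setwise: "\<exists>g\<in>G. g ` {x, y} = {x', y'}"
    if "x \<in> P" "y \<in> P" "x \<noteq> y" "x' \<in> P" "y' \<in> P" "x' \<noteq> y'" for x y x' y'
  proof -
    obtain c where "c \<in> P" "c \<noteq> x" "c \<noteq> y"
      using third by blast
    moreover obtain c' where "c' \<in> P" "c' \<noteq> x'" "c' \<noteq> y'"
      using third by blast
    ultimately show ?thesis
      using flags[of x y c x' y' c'] that by auto
  qed
  have tr: "transitive_on G P"
    unfolding transitive_on_def
  proof (intro ballI)
    fix x y assume xy: "x \<in> P" "y \<in> P"
    obtain a where a: "a \<in> P" "a \<noteq> x"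
      using third[of x x] by blast
    obtain b where b: "b \<in> P" "b \<noteq> x" "b \<noteq> a"
      using third[of x a] by blast
    obtain a' where a': "a' \<in> P" "a' \<noteq> y"
      using third[of y y] by blast
    obtain b' where b': "b' \<in> P" "b' \<noteq> y" "b' \<noteq> a'"
      using third[of y a'] by blast
    show "\<exists>g\<in>G. g x = y"
      using flags[of a b x a' b' y] xy a b a' b' by auto
  qed
  have swap: "\<exists>g\<in>G. g x = y \<and> g y = x" if xy: "x \<in> P" "y \<in> P" "x \<noteq> y" for x y
  proof (rule perm_group_on_swap[OF G fin _ tr xy])
    show "card P \<noteq> 3"
      using v by simp
    fix c c' assume "c \<in> P - {x, y}" "c' \<in> P - {x, y}"
    then show "\<exists>g\<in>G. g ` {x, y} = {x, y} \<and> g c = c'"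
      using flags[of x y c x y c'] xy by auto
  qed
  show ?thesis
    unfolding two_transitive_on_def
  proof (intro ballI impI)
    fix x y x' y' assume h: "x \<in> P" "y \<in> P" "x' \<in> P" "y' \<in> P" "x \<noteq> y" "x' \<noteq> y'"
    obtain g where g: "g \<in> G" "g ` {x, y} = {x', y'}"
      using setwise h by blast
    have "g x \<noteq> g y"
      using permutes_inj[OF perm_group_on_permutes[OF G g(1)]] h(5) by (metis injD)
    then consider "g x = x'" "g y = y'" | "g x = y'" "g y = x'"
      using g(2) by (auto simp: doubleton_eq_iff)
    then show "\<exists>g\<in>G. g x = x' \<and> g y = y'"
    proof cases
      case 1
      then show ?thesis using g(1) by blast
    next
      case 2
      obtain s where s: "s \<in> G" "s x' = y'" "s y' = x'"
        using swap h by blast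
      have "(s \<circ> g) x = x' \<and> (s \<circ> g) y = y'"
        using 2 s by simp
      then show ?thesis
        using perm_group_on_comp[OF G s(1) g(1)] by blast
    qed
  qed
qed

lemma design2_finite_blocks:
  assumes "design2 P Bs k lam"
  shows "finite Bs"
proof -
  have "Bs \<subseteq> Pow P"
    using assms unfolding design2_def by blast
  then show ?thesis
    using assms finite_subset unfolding design2_def by blast
qed

lemma design2_ex_block_containing:
  assumes D: "design2 P Bs k lam" and x: "x \<in> P"
  shows "\<exists>B\<in>Bs. x \<in> B"
proof -
  have "finite P" "3 \<le> card P"
    using D unfolding design2_def by auto
  then obtain y where y: "y \<in> P" "y \<noteq> x"
    using ex_in_Diff_doubleton[of P x x] by blast
  have "card {B \<in> Bs. x \<in> B \<and> y \<in> B} = lam" "0 < lam"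
    using D x y unfolding design2_def by auto
  then have "{B \<in> Bs. x \<in> B \<and> y \<in> B} \<noteq> {}"
    by (metis card.empty less_irrefl)
  then show ?thesis
    by blast
qed

lemma flag_transitiveD:
  assumes "flag_transitive G P Bs" "B \<in> Bs" "x \<in> B" "C \<in> Bs" "y \<in> C"
  shows "\<exists>g\<in>G. g x = y \<and> g ` B = C"
  using assms unfolding flag_transitive_def by blast

lemma flag_transitive_imp_transitive_on:
  assumes "design2 P Bs k lam" "flag_transitive G P Bs"
  shows "transitive_on G P"
  unfolding transitive_on_def
proof (intro ballI)
  fix x y assume "x \<in> P" "y \<in> P"
  obtain B where "B \<in> Bs" "x \<in> B"
    using design2_ex_block_containing[OF assms(1) \<open>x \<in> P\<close>] by blast
  moreover obtain C where "C \<in> Bs" "y \<in> C"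
    using design2_ex_block_containing[OF assms(1) \<open>y \<in> P\<close>] by blast
  ultimately show "\<exists>g\<in>G. g x = y"
    using flag_transitiveD[OF assms(2)] by blast
qed

lemma card_blocks_avoiding_eq:
  assumes A: "automorphism_group G P Bs" and tr: "transitive_on G P" and fin: "finite Bs"
    and xy: "x \<in> P" "y \<in> P"
  shows "card {B \<in> Bs. x \<notin> B} = card {B \<in> Bs. y \<notin> B}"
proof -
  have le: "card {B \<in> Bs. x \<notin> B} \<le> card {B \<in> Bs. y \<notin> B}"
    if x: "x \<in> P" and y: "y \<in> P" for x y
  proof -
    obtain g where g: "g \<in> G" "g x = y"
      using tr x y unfolding transitive_on_def by blast
    have inj: "inj g"
      using A g(1) permutes_inj unfolding automorphism_group_def perm_group_on_def by blast
    show ?thesis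
    proof (rule card_inj_on_le)
      show "inj_on ((`) g) {B \<in> Bs. x \<notin> B}"
        using inj by (simp add: inj_on_def inj_image_eq_iff)
      show "(`) g ` {B \<in> Bs. x \<notin> B} \<subseteq> {B \<in> Bs. y \<notin> B}"
        using A g inj unfolding automorphism_group_def by (auto dest: injD)
      show "finite {B \<in> Bs. y \<notin> B}"
        using fin by simp
    qed
  qed
  show ?thesis
    using le[OF xy] le[OF xy(2,1)] by simp
qed

lemma card_blocks_containing_both:
  assumes "finite Bs"
  shows "card {B \<in> Bs. x \<in> B \<and> y \<in> B} + card {B \<in> Bs. x \<notin> B} + card {B \<in> Bs. y \<notin> B}
           = card Bs + card {B \<in> Bs. x \<notin> B \<and> y \<notin> B}"
proof -
  let ?XY = "{B \<in> Bs. x \<in> B \<and> y \<in> B}"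
  let ?X = "{B \<in> Bs. x \<notin> B}" and ?Y = "{B \<in> Bs. y \<notin> B}"
  have "card ?X + card ?Y = card (?X \<union> ?Y) + card (?X \<inter> ?Y)"
    using assms by (intro card_Un_Int) simp_all
  also have "?X \<union> ?Y = Bs - ?XY"
    by blast
  also have "?X \<inter> ?Y = {B \<in> Bs. x \<notin> B \<and> y \<notin> B}"
    by blast
  also have "card (Bs - ?XY) = card Bs - card ?XY"
    using assms by (intro card_Diff_subset) auto
  finally have "card ?X + card ?Y = card Bs - card ?XY + card {B \<in> Bs. x \<notin> B \<and> y \<notin> B}" .
  moreover have "card ?XY \<le> card Bs"
    using assms by (intro card_mono) auto
  ultimately show ?thesis
    by linarith
qed

lemma blocks_avoiding_both:
  assumes D: "design2 P Bs k lam" and v: "card P = k + 2" and xy: "x \<in> P" "y \<in> P" "x \<noteq> y"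
  shows "{B \<in> Bs. x \<notin> B \<and> y \<notin> B} = {P - {x, y}} \<inter> Bs"
proof (intro equalityI subsetI)
  have fin: "finite P" and blk: "\<And>B. B \<in> Bs \<Longrightarrow> B \<subseteq> P \<and> card B = k"
    using D unfolding design2_def by auto
  fix B assume B: "B \<in> {B \<in> Bs. x \<notin> B \<and> y \<notin> B}"
  have "B \<subseteq> P - {x, y}"
    using B blk by blast
  moreover have "card (P - {x, y}) = k"
    using fin xy v by (simp add: card_Diff_subset)
  ultimately have "B = P - {x, y}"
    using B blk fin by (metis (no_types, lifting) card_subset_eq finite_Diff mem_Collect_eq)
  then show "B \<in> {P - {x, y}} \<inter> Bs"
    using B by blast
qed blast

lemma complete_design_if_card_eq_Suc_Suc:
  assumes D: "design2 P Bs k lam" and v: "card P = k + 2" and ne: "Bs \<noteq> {}"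
    and avoid: "\<And>x y. x \<in> P \<Longrightarrow> y \<in> P \<Longrightarrow> card {B \<in> Bs. x \<notin> B} = card {B \<in> Bs. y \<notin> B}"
  shows "complete_design P Bs k"
proof -
  have fin: "finite P" and blk: "\<And>B. B \<in> Bs \<Longrightarrow> B \<subseteq> P \<and> card B = k"
    and pairs: "\<And>x y. x \<in> P \<Longrightarrow> y \<in> P \<Longrightarrow> x \<noteq> y \<Longrightarrow> card {B \<in> Bs. x \<in> B \<and> y \<in> B} = lam"
    using D unfolding design2_def by auto
  have finBs: "finite Bs"
    using design2_finite_blocks[OF D] .
  obtain x0 where x0: "x0 \<in> P"
    using v by fastforce
  define d where "d = card {B \<in> Bs. x0 \<notin> B}"
  have count: "card {B \<in> Bs. x \<notin> B \<and> y \<notin> B} + card Bs = lam + 2 * d"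
    if xy: "x \<in> P" "y \<in> P" "x \<noteq> y" for x y
    using card_blocks_containing_both[OF finBs, of x y] pairs[OF xy] avoid[OF xy(1) x0]
      avoid[OF xy(2) x0] unfolding d_def by linarith
  obtain B0 where B0: "B0 \<in> Bs"
    using ne by blast
  then obtain x1 y1 where xy1: "x1 \<in> P" "y1 \<in> P" "x1 \<noteq> y1" "B0 = P - {x1, y1}"
    using subset_eq_Diff_doubleton_if_card[OF fin] blk v by metis
  then have "card {B \<in> Bs. x1 \<notin> B \<and> y1 \<notin> B} = 1"
    using blocks_avoiding_both[OF D v xy1(1-3)] B0 by simp
  then have all_pairs: "P - {x, y} \<in> Bs" if xy: "x \<in> P" "y \<in> P" "x \<noteq> y" for x y
    using count[OF xy] count[OF xy1(1-3)] blocks_avoiding_both[OF D v xy]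
    by (cases "P - {x, y} \<in> Bs") auto
  show ?thesis
    unfolding complete_design_def
  proof (intro equalityI subsetI)
    fix B assume "B \<in> {B. B \<subseteq> P \<and> card B = k}"
    then obtain x y where "x \<in> P" "y \<in> P" "x \<noteq> y" "B = P - {x, y}"
      using subset_eq_Diff_doubleton_if_card[OF fin, of B] v by auto
    then show "B \<in> Bs"
      using all_pairs by blast
  qed (use blk in blast)
qed

lemma complete_and_two_transitive_if_card_eq_Suc:
  assumes D: "design2 P Bs k lam" and A: "automorphism_group G P Bs"
    and F: "flag_transitive G P Bs" and v: "card P = k + 1"
  shows "complete_design P Bs k \<and> two_transitive_on G P"
proof -
  have fin: "finite P" and blk: "\<And>B. B \<in> Bs \<Longrightarrow> B \<subseteq> P \<and> card B = k"
    using D unfolding design2_def by auto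
  have perm: "\<And>g. g \<in> G \<Longrightarrow> g permutes P" and aut: "\<And>g B. g \<in> G \<Longrightarrow> B \<in> Bs \<Longrightarrow> g ` B \<in> Bs"
    using A perm_group_on_permutes unfolding automorphism_group_def by blast+
  have tr: "transitive_on G P"
    using flag_transitive_imp_transitive_on[OF D F] .
  obtain x0 where "x0 \<in> P"
    using v by fastforce
  then obtain B0 where B0: "B0 \<in> Bs"
    using design2_ex_block_containing[OF D] by blast
  then obtain z0 where z0: "z0 \<in> P" "B0 = P - {z0}"
    using subset_eq_Diff_singleton_if_card[OF fin] blk v by metis
  have blocks: "P - {z} \<in> Bs" if z: "z \<in> P" for z
  proof -
    obtain g where g: "g \<in> G" "g z0 = z"
      using tr z0(1) z unfolding transitive_on_def by blast
    then have "g ` B0 = P - {z}"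
      using permutes_image_Diff_eq_Diff_iff[OF perm[OF g(1)]] z0 z by simp
    then show ?thesis
      using aut[OF g(1) B0] by simp
  qed
  have "complete_design P Bs k"
    unfolding complete_design_def
  proof (intro equalityI subsetI)
    fix B assume "B \<in> {B. B \<subseteq> P \<and> card B = k}"
    then obtain z where "z \<in> P" "B = P - {z}"
      using subset_eq_Diff_singleton_if_card[OF fin, of B] v by auto
    then show "B \<in> Bs"
      using blocks by blast
  qed (use blk in blast)
  moreover have "two_transitive_on G P"
    unfolding two_transitive_on_def
  proof (intro ballI impI)
    fix x y x' y' assume h: "x \<in> P" "y \<in> P" "x' \<in> P" "y' \<in> P" "x \<noteq> y" "x' \<noteq> y'"
    obtain g where g: "g \<in> G" "g x = x'" "g ` (P - {y}) = P - {y'}"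
      using flag_transitiveD[OF F blocks[OF h(2)] _ blocks[OF h(4)], of x x'] h by blast
    then have "g y = y'"
      using permutes_image_Diff_eq_Diff_iff[OF perm[OF g(1)]] h(2,4) by simp
    then show "\<exists>g\<in>G. g x = x' \<and> g y = y'"
      using g(1,2) by blast
  qed
  ultimately show ?thesis ..
qed

lemma complete_and_two_transitive_if_card_eq_Suc_Suc:
  assumes D: "design2 P Bs k lam" and A: "automorphism_group G P Bs"
    and F: "flag_transitive G P Bs" and v: "card P = k + 2"
  shows "complete_design P Bs k \<and> two_transitive_on G P"
proof -
  have fin: "finite P" and k: "2 \<le> k"
    using D unfolding design2_def by auto
  have G: "perm_group_on G P"
    using A unfolding automorphism_group_def by blast
  have tr: "transitive_on G P"
    using flag_transitive_imp_transitive_on[OF D F] .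
  obtain x0 where "x0 \<in> P"
    using v by fastforce
  then have "Bs \<noteq> {}"
    using design2_ex_block_containing[OF D] by blast
  then have complete: "complete_design P Bs k"
    using complete_design_if_card_eq_Suc_Suc[OF D v] card_blocks_avoiding_eq[OF A tr
        design2_finite_blocks[OF D]] by blast
  have blocks: "P - {a, b} \<in> Bs" if "a \<in> P" "b \<in> P" "a \<noteq> b" for a b
    using complete that fin v unfolding complete_design_def by (simp add: card_Diff_subset)
  have "two_transitive_on G P"
  proof (rule two_transitive_onI_point_pair_flags[OF G fin])
    show "4 \<le> card P"
      using v k by simp
    fix a b c a' b' c'
    assume "{a, b, c} \<subseteq> P" "{a', b', c'} \<subseteq> P" "distinct [a, b, c]" "distinct [a', b', c']"
    then obtain g where g: "g \<in> G" "g c = c'" "g ` (P - {a, b}) = P - {a', b'}"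
      using flag_transitiveD[OF F blocks[of a b] _ blocks[of a' b'], of c c'] by auto
    then have "g ` {a, b} = {a', b'}"
      using permutes_image_Diff_eq_Diff_iff[OF perm_group_on_permutes[OF G g(1)]]
        \<open>{a, b, c} \<subseteq> P\<close> \<open>{a', b', c'} \<subseteq> P\<close> by simp
    then show "\<exists>g\<in>G. g c = c' \<and> g ` {a, b} = {a', b'}"
      using g(1,2) by blast
  qed
  with complete show ?thesis ..
qed

theorem lemma5p2:
  fixes P :: "'a set" and Bs :: "'a set set" and G :: "('a \<Rightarrow> 'a) set"
    and k lam :: nat
  assumes "design2 P Bs k lam"
    and "automorphism_group G P Bs"
    and "flag_transitive G P Bs"
    and "card P = k + 1 \<or> card P = k + 2"
  shows "(complete_design P Bs k \<and> two_transitive_on G P)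
       \<or> (odd k \<and> primitive_on G P \<and> rank G P = 3
          \<and> (\<forall>x\<in>P. subdegrees G P x = {# 1, (k + 1) div 2, (k + 1) div 2 #}))"
  using assms(4) complete_and_two_transitive_if_card_eq_Suc[OF assms(1-3)]
    complete_and_two_transitive_if_card_eq_Suc_Suc[OF assms(1-3)] by blast

end
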